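(* For every $M\in\Lambda^{001}$, $H_r(\mathcal T(M))=\mathcal T(H(M))$.
   Context: $\Lambda^{001}$ is the set of possibly infinite λ-terms (trees of variables, abstractions $\lambda x.M$ and applications $(M)N$) whose infinite branches all enter infinitely often the argument position of an application, up to α-equivalence; $M[N/x]$ is capture-avoiding substitution. Every $M\in\Lambda^{001}$ is either of the form $\lambda x_1\dots\lambda x_m.(\dots((\lambda z.N)P)Q_1\dots)Q_n$ (with head redex $(\lambda z.N)P$) or of the form $\lambda x_1\dots\lambda x_m.(\dots((y)Q_1)\dots)Q_n$ (head normal form, hnf). $H(M)=\lambda x_1\dots\lambda x_m.(\dots((N[P/z])Q_1)\dots)Q_n$ in the first case and $H(M)=M$ in the second. Resource terms: $s::=x\mid\lambda x.s\mid\langle s\rangle\bar t$, with $\bar t$ a finite multiset of resource terms; constructors are extended by linearity to finite sums (finite sets of resource terms). Resource substitution $s\langle\bar t/x\rangle$, for $\bar t=[t_1,\dots,t_n]$, is the sum over $\sigma\in\mathfrak S_n$ of the terms obtained by substituting $t_{\sigma(i)}$ for the $i$-th free occurrence of $x$ in $s$ if $x$ has exactly $n$ free occurrences, and $0$ (empty) otherwise. Every resource term is $s=\lambda x_1\dots\lambda x_m.\langle\dots\langle u\rangle\bar t_1\dots\rangle\bar t_n$ with $u$ a variable or a redex $\langle\lambda z.v\rangle\bar w$; in the latter case $H_r(s)=\lambda x_1\dots\lambda x_m.\langle\dots\langle v\langle\bar w/z\rangle\rangle\bar t_1\dots\rangle\bar t_n$ (a finite sum), otherwise $H_r(s)=s$.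 For a set $\mathcal S$ of resource terms, $H_r(\mathcal S)=\bigcup_{s\in\mathcal S}H_r(s)$. Taylor approximation $\ltimes$ is inductive: $x\ltimes x$; $s\ltimes M\Rightarrow\lambda x.s\ltimes\lambda x.M$; ($s\ltimes M$ and $t_i\ltimes N$ for all $i$) $\Rightarrow\langle s\rangle[t_1,\dots,t_n]\ltimes(M)N$; $\mathcal T(M)=\{s : s\ltimes M\}$. *)

theory Defs
  imports Main "HOL-Library.Multiset"
begin

codatatype lterm = LVar nat | LLam lterm | LApp lterm lterm

primcorec liftn :: "nat \<Rightarrow> nat \<Rightarrow> lterm \<Rightarrow> lterm" where
  "liftn n k M = (case M of
      LVar i \<Rightarrow> LVar (if i < k then i else i + n)
    | LLam N \<Rightarrow> LLam (liftn n (Suc k) N)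
    | LApp P Q \<Rightarrow> LApp (liftn n k P) (liftn n k Q))"

text \<open>Capture-avoiding substitution M[P/k] (de Bruijn): the binder of k disappears.\<close>
primcorec subst :: "lterm \<Rightarrow> nat \<Rightarrow> lterm \<Rightarrow> lterm" where
  "subst M k P = (case M of
      LVar i \<Rightarrow> (if i = k then liftn k 0 P else LVar (if i < k then i else i - 1))
    | LLam N \<Rightarrow> LLam (subst N (Suc k) P)
    | LApp A B \<Rightarrow> LApp (subst A k P) (subst B k P))"

inductive sub :: "lterm \<Rightarrow> lterm \<Rightarrow> bool" where
  sub_refl: "sub M M"
| sub_lam: "sub N M \<Longrightarrow> sub N (LLam M)"
| sub_fun: "sub N M \<Longrightarrow> sub N (LApp M P)"
| sub_arg: "sub N P \<Longrightarrow> sub N (LApp M P)"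

inductive spine_fin :: "lterm \<Rightarrow> bool" where
  "spine_fin (LVar i)"
| "spine_fin M \<Longrightarrow> spine_fin (LLam M)"
| "spine_fin M \<Longrightarrow> spine_fin (LApp M N)"

text \<open>Lambda^001: every infinite branch enters argument positions infinitely often,
  i.e. from no position is there an infinite branch avoiding argument positions.\<close>
definition lam001 :: "lterm \<Rightarrow> bool" where
  "lam001 M \<longleftrightarrow> (\<forall>N. sub N M \<longrightarrow> spine_fin N)"

primcorec H :: "lterm \<Rightarrow> lterm" where
  "H M = (case M of
      LVar i \<Rightarrow> LVar i
    | LLam N \<Rightarrow> LLam (H N)
    | LApp P Q \<Rightarrow> (case P of
          LLam N \<Rightarrow> subst N 0 Q
        | LVar i \<Rightarrow> LApp (LVar i) Q
        | LApp P1 P2 \<Rightarrow> LApp (H (LApp P1 P2)) Q))"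

datatype rterm = RVar nat | RLam rterm | RApp rterm "rterm multiset"

primrec rlift :: "nat \<Rightarrow> nat \<Rightarrow> rterm \<Rightarrow> rterm" where
  "rlift n k (RVar i) = RVar (if i < k then i else i + n)"
| "rlift n k (RLam s) = RLam (rlift n (Suc k) s)"
| "rlift n k (RApp s ts) = RApp (rlift n k s) (image_mset (rlift n k) ts)"

text \<open>Resource substitution s<ts/k>: rsub s k ts r holds iff r is one of the summands
  (finite sums being finite sets), i.e. r is obtained by distributing the elements of
  the multiset ts bijectively over the free occurrences of k in s; no summand if the
  number of occurrences differs from the size of ts.\<close>
inductive rsub :: "rterm \<Rightarrow> nat \<Rightarrow> rterm multiset \<Rightarrow> rterm \<Rightarrow> bool"
  and rsubb :: "rterm multiset \<Rightarrow> nat \<Rightarrow> rterm multiset \<Rightarrow> rterm multiset \<Rightarrow> bool" where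
  rsub_var_eq: "rsub (RVar k) k {#t#} (rlift k 0 t)"
| rsub_var_neq: "i \<noteq> k \<Longrightarrow> rsub (RVar i) k {#} (RVar (if i < k then i else i - 1))"
| rsub_lam: "rsub s (Suc k) ts r \<Longrightarrow> rsub (RLam s) k ts (RLam r)"
| rsub_app: "rsub s k ts1 r \<Longrightarrow> rsubb us k ts2 rs \<Longrightarrow> rsub (RApp s us) k (ts1 + ts2) (RApp r rs)"
| rsubb_empty: "rsubb {#} k {#} {#}"
| rsubb_add: "rsub u k ts1 r \<Longrightarrow> rsubb us k ts2 rs \<Longrightarrow>
     rsubb (add_mset u us) k (ts1 + ts2) (add_mset r rs)"

text \<open>Resource head reduction H_r on a single resource term (a finite sum = finite set).\<close>
primrec Hr1 :: "rterm \<Rightarrow> rterm set" where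
  "Hr1 (RVar i) = {RVar i}"
| "Hr1 (RLam s) = RLam ` Hr1 s"
| "Hr1 (RApp s ts) = (case s of
      RLam v \<Rightarrow> {r. rsub v 0 ts r}
    | RVar i \<Rightarrow> {RApp (RVar i) ts}
    | RApp s1 us \<Rightarrow> (\<lambda>r. RApp r ts) ` Hr1 s)"

definition Hr :: "rterm set \<Rightarrow> rterm set" where
  "Hr S = (\<Union>s\<in>S. Hr1 s)"

inductive taylor :: "rterm \<Rightarrow> lterm \<Rightarrow> bool" where
  "taylor (RVar i) (LVar i)"
| "taylor s M \<Longrightarrow> taylor (RLam s) (LLam M)"
| "taylor s M \<Longrightarrow> (\<forall>t. t \<in># ts \<longrightarrow> taylor t N) \<Longrightarrow> taylor (RApp s ts) (LApp M N)"

definition T :: "lterm \<Rightarrow> rterm set" where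
  "T M = {s. taylor s M}"

end

theory Submission
  imports Defs
begin

text \<open>Taylor approximation commutes with substitution: the approximants of \<open>M[P/k]\<close> are
  exactly the summands of \<open>s\<langle>ts/k\<rangle>\<close> with \<open>s\<close> approximating \<open>M\<close> and every element of
  \<open>ts\<close> approximating \<open>P\<close>, because both sides follow the same structural recursion and the
  variable \<open>k\<close> is approximated only by itself, which takes a singleton bag. Head reduction
  performs one substitution at the head of the spine, so \<open>H\<^sub>r(T(M)) = T(H(M))\<close> follows
  by induction on the finite resource term.\<close>

lemma liftn_simps [simp]:
  "liftn n k (LVar i) = LVar (if i < k then i else i + n)"
  "liftn n k (LLam N) = LLam (liftn n (Suc k) N)"
  "liftn n k (LApp P Q) = LApp (liftn n k P) (liftn n k Q)"
  by (subst liftn.code; simp)+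

lemma subst_simps [simp]:
  "subst (LVar i) k P = (if i = k then liftn k 0 P else LVar (if i < k then i else i - 1))"
  "subst (LLam N) k P = LLam (subst N (Suc k) P)"
  "subst (LApp A B) k P = LApp (subst A k P) (subst B k P)"
  by (subst subst.code; simp)+

lemma H_simps [simp]:
  "H (LVar i) = LVar i"
  "H (LLam N) = LLam (H N)"
  "H (LApp (LLam N) Q) = subst N 0 Q"
  "H (LApp (LVar i) Q) = LApp (LVar i) Q"
  "H (LApp (LApp P1 P2) Q) = LApp (H (LApp P1 P2)) Q"
  by (subst H.code; simp)+

lemma taylor_lterm_iff:
  "taylor r (LVar i) \<longleftrightarrow> r = RVar i"
  "taylor r (LLam M) \<longleftrightarrow> (\<exists>s. r = RLam s \<and> taylor s M)"
  "taylor r (LApp M N) \<longleftrightarrow> (\<exists>s ts. r = RApp s ts \<and> taylor s M \<and> (\<forall>t\<in>#ts. taylor t N))"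
  by (auto elim: taylor.cases intro: taylor.intros)

lemma taylor_rterm_iff:
  "taylor (RVar i) N \<longleftrightarrow> N = LVar i"
  "taylor (RLam s) N \<longleftrightarrow> (\<exists>M. N = LLam M \<and> taylor s M)"
  "taylor (RApp s ts) N \<longleftrightarrow> (\<exists>A B. N = LApp A B \<and> taylor s A \<and> (\<forall>t\<in>#ts. taylor t B))"
  by (auto elim: taylor.cases intro: taylor.intros)

lemma size_lt_RApp_arg: "t \<in># ts \<Longrightarrow> size t < size (RApp s ts)"
  by (auto dest!: multi_member_split)

lemma ex_image_mset_preimage:
  assumes "\<forall>x\<in>#A. \<exists>y. x = f y \<and> P y"
  shows "\<exists>B. A = image_mset f B \<and> (\<forall>y\<in>#B. P y)"
  using assms
proof (induction A)
  case (add x A)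
  then obtain B y where "A = image_mset f B" "\<forall>y\<in>#B. P y" "x = f y" "P y"
    by auto
  then show ?case
    by (intro exI[of _ "add_mset y B"]) auto
qed simp

lemma taylor_rlift: "taylor s M \<Longrightarrow> taylor (rlift n k s) (liftn n k M)"
  by (induction s M arbitrary: k rule: taylor.induct) (auto intro!: taylor.intros)

lemma taylor_liftn_imp_rlift:
  "taylor r (liftn n k M) \<Longrightarrow> \<exists>s. r = rlift n k s \<and> taylor s M"
proof (induction r arbitrary: M k)
  case (RVar i)
  then show ?case
    by (cases M) (auto simp: taylor_lterm_iff intro: taylor.intros)
next
  case (RLam r)
  then obtain N where "M = LLam N" "taylor r (liftn n (Suc k) N)"
    by (cases M) (auto simp: taylor_lterm_iff)
  moreover obtain s where "r = rlift n (Suc k) s" "taylor s N"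
    using RLam.IH calculation(2) by blast
  ultimately show ?case
    by (intro exI[of _ "RLam s"]) (auto intro: taylor.intros)
next
  case (RApp r rs)
  then obtain A B where M: "M = LApp A B"
    and r: "taylor r (liftn n k A)" and rs: "\<forall>t\<in>#rs. taylor t (liftn n k B)"
    by (cases M) (auto simp: taylor_lterm_iff)
  obtain s where "r = rlift n k s" "taylor s A"
    using RApp.IH(1)[OF r] by blast
  moreover obtain ss where "rs = image_mset (rlift n k) ss" "\<forall>s\<in>#ss. taylor s B"
    using ex_image_mset_preimage[of rs "rlift n k" "\<lambda>s. taylor s B"] RApp.IH(2) rs by blast
  ultimately show ?case
    unfolding M by (intro exI[of _ "RApp s ss"]) (auto intro: taylor.intros)
qed

lemma taylor_rsub:
  "rsub s k ts r \<Longrightarrow> taylor s N \<Longrightarrow> \<forall>t\<in>#ts. taylor t P \<Longrightarrow> taylor r (subst N k P)"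
  and taylor_rsubb:
  "rsubb us k ts rs \<Longrightarrow> \<forall>u\<in>#us. taylor u N \<Longrightarrow> \<forall>t\<in>#ts. taylor t P \<Longrightarrow>
     \<forall>r\<in>#rs. taylor r (subst N k P)"
  by (induction arbitrary: N and N rule: rsub_rsubb.inducts)
    (auto simp: taylor_rterm_iff intro: taylor.intros taylor_rlift)

lemma rsubb_of_rsub:
  assumes "\<forall>r\<in>#rs. \<exists>s ts. A s \<and> (\<forall>t\<in>#ts. B t) \<and> rsub s k ts r"
  shows "\<exists>us ts. (\<forall>u\<in>#us. A u) \<and> (\<forall>t\<in>#ts. B t) \<and> rsubb us k ts rs"
  using assms
proof (induction rs)
  case empty
  show ?case
    by (intro exI[of _ "{#}"]) (auto intro: rsubb_empty)
next
  case (add r rs)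
  have "\<forall>r\<in>#rs. \<exists>s ts. A s \<and> (\<forall>t\<in>#ts. B t) \<and> rsub s k ts r"
    using add.prems by simp
  then obtain us ts where us: "\<forall>u\<in>#us. A u" "\<forall>t\<in>#ts. B t" "rsubb us k ts rs"
    using add.IH by blast
  obtain s ts' where s: "A s" "\<forall>t\<in>#ts'. B t" "rsub s k ts' r"
    using add.prems by (meson union_single_eq_member)
  have "rsubb (add_mset s us) k (ts' + ts) (add_mset r rs)"
    using s(3) us(3) by (rule rsubb_add)
  moreover have "\<forall>u\<in>#add_mset s us. A u" "\<forall>t\<in>#ts' + ts. B t"
    using us s by auto
  ultimately show ?case
    by blast
qed

lemma taylor_subst_imp_rsub:
  "taylor r (subst N k P) \<Longrightarrow> \<exists>s ts. taylor s N \<and> (\<forall>t\<in>#ts. taylor t P) \<and> rsub s k ts r"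
proof (induction r arbitrary: N k rule: measure_induct_rule[where f = size])
  case (less r)
  show ?case
  proof (cases N)
    case (LVar j)
    show ?thesis
    proof (cases "j = k")
      case True
      then obtain t where "r = rlift k 0 t" "taylor t P"
        using less.prems LVar taylor_liftn_imp_rlift by fastforce
      then show ?thesis
        using LVar True
        by (intro exI[of _ "RVar k"] exI[of _ "{#t#}"]) (auto simp: taylor_lterm_iff intro: rsub_var_eq)
    next
      case False
      then show ?thesis
        using less.prems LVar rsub_var_neq[OF False]
        by (intro exI[of _ "RVar j"] exI[of _ "{#}"]) (auto simp: taylor_lterm_iff)
    qed
  next
    case (LLam N')
    then obtain r' where r: "r = RLam r'" "taylor r' (subst N' (Suc k) P)"
      using less.prems by (auto simp: taylor_lterm_iff)
    then show ?thesis
      using less.IH[of r'] LLam by (fastforce intro: taylor.intros rsub_lam)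
  next
    case (LApp A B)
    then obtain r' rs where r: "r = RApp r' rs" and r': "taylor r' (subst A k P)"
      and rs: "\<forall>t\<in>#rs. taylor t (subst B k P)"
      using less.prems by (auto simp: taylor_lterm_iff)
    obtain s ts where "taylor s A" "\<forall>t\<in>#ts. taylor t P" "rsub s k ts r'"
      using less.IH[OF _ r'] r by auto
    moreover have "\<forall>t\<in>#rs. \<exists>s ts. taylor s B \<and> (\<forall>t\<in>#ts. taylor t P) \<and> rsub s k ts t"
      using less.IH rs size_lt_RApp_arg unfolding r by blast
    then obtain us ts' where "\<forall>u\<in>#us. taylor u B" "\<forall>t\<in>#ts'. taylor t P" "rsubb us k ts' rs"
      by (rule rsubb_of_rsub[THEN exE]) blast
    ultimately show ?thesis
      unfolding r LApp
      by (intro exI[of _ "RApp s us"] exI[of _ "ts + ts'"]) (auto intro: taylor.intros rsub_app)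
  qed
qed

lemma taylor_H_of_Hr1: "taylor s M \<Longrightarrow> r \<in> Hr1 s \<Longrightarrow> taylor r (H M)"
proof (induction s M arbitrary: r rule: taylor.induct)
  case (3 s M ts N)
  show ?case
  proof (cases M)
    case (LVar i)
    then show ?thesis using 3 by (auto simp: taylor_lterm_iff)
  next
    case (LLam N')
    then show ?thesis using 3 by (auto simp: taylor_lterm_iff intro: taylor_rsub)
  next
    case (LApp P1 P2)
    then show ?thesis using 3 by (auto simp: taylor_lterm_iff intro: taylor.intros)
  qed
qed (auto intro: taylor.intros)

lemma lterm_head_cases:
  obtains i where "M = LVar i"
  | N where "M = LLam N"
  | N Q where "M = LApp (LLam N) Q"
  | i Q where "M = LApp (LVar i) Q"
  | P1 P2 Q where "M = LApp (LApp P1 P2) Q"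
  by (metis lterm.exhaust)

lemma taylor_H_imp_Hr1: "taylor r (H M) \<Longrightarrow> \<exists>s. taylor s M \<and> r \<in> Hr1 s"
proof (induction r arbitrary: M rule: measure_induct_rule[where f = size])
  case (less r)
  show ?case
  proof (cases M rule: lterm_head_cases)
    case (1 i)
    then show ?thesis
      using less.prems by (intro exI[of _ r]) (auto simp: taylor_lterm_iff intro: taylor.intros)
  next
    case (2 N)
    then obtain r' where r: "r = RLam r'" "taylor r' (H N)"
      using less.prems by (auto simp: taylor_lterm_iff)
    then obtain s where "taylor s N" "r' \<in> Hr1 s"
      using less.IH[of r'] by auto
    then show ?thesis
      using r 2 by (intro exI[of _ "RLam s"]) (auto intro: taylor.intros)
  next
    case (3 N Q)
    then obtain s ts where "taylor s N" "\<forall>t\<in>#ts. taylor t Q" "rsub s 0 ts r"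
      using less.prems taylor_subst_imp_rsub by fastforce
    then show ?thesis
      using 3 by (intro exI[of _ "RApp (RLam s) ts"]) (auto intro: taylor.intros)
  next
    case (4 i Q)
    then show ?thesis
      using less.prems by (intro exI[of _ r]) (auto simp: taylor_lterm_iff)
  next
    case (5 P1 P2 Q)
    then obtain r' ts where r: "r = RApp r' ts" "taylor r' (H (LApp P1 P2))" "\<forall>t\<in>#ts. taylor t Q"
      using less.prems by (auto simp: taylor_lterm_iff)
    then obtain s where s: "taylor s (LApp P1 P2)" "r' \<in> Hr1 s"
      using less.IH[of r'] by auto
    then obtain s1 us where "s = RApp s1 us"
      by (auto simp: taylor_lterm_iff)
    then show ?thesis
      using r s 5 by (intro exI[of _ "RApp s ts"]) (auto intro: taylor.intros)
  qed
qed

theorem mainTheorem9: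
  fixes M :: lterm
  assumes "lam001 M"
  shows "Hr (T M) = T (H M)"
proof
  show "Hr (T M) \<subseteq> T (H M)"
    unfolding Hr_def T_def using taylor_H_of_Hr1 by blast
  show "T (H M) \<subseteq> Hr (T M)"
    unfolding Hr_def T_def using taylor_H_imp_Hr1 by blast
qed

end
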